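(* For each integer $d\ge0$, let $T_d(t)=\sum_{i=0}^dT(d,i)t^i$ be the unique polynomial of degree $d$ satisfying $T(d,i)=T(d,d-i)$, such that for $0\le i\le d/2$, $T(d,i)$ is the coefficient of $t^i$ in $\sum_{j=0}^d\binom{d+1}{j}2^jt^j(1-t)^{d-j}$. Set $T(d,i)=0$ for $i<0$. Then for $0\le i<d/2$, $$T(d,i)=T(d-1,i)+T(d-1,i-1),$$ and for $d=2k$ with $k\ge1$, $$T(2k,k)=2T(2k-1,k-1)+\binom{2k}{k}.$$ Consequently $T(d,i)=\sum_{j=0}^i\binom{d+1}{j}$ for $0\le i\le d/2$. *)

theory Defs
  imports "HOL-Computational_Algebra.Polynomial"
begin

definition Ppoly :: "nat \<Rightarrow> int poly" where
  "Ppoly d = (\<Sum>j\<le>d. smult (of_nat ((d+1) choose j) * 2^j) ([:0,1:]^j * [:1,-1:]^(d-j)))"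

text \<open>T(d,i): for 0 <= i <= d/2 the coefficient of t^i in Ppoly d; for d/2 < i <= d
  defined by the symmetry T(d,i) = T(d,d-i); zero for i < 0 (and i > d, since T_d has degree d).\<close>
definition T :: "nat \<Rightarrow> int \<Rightarrow> int" where
  "T d i = (if i < 0 \<or> i > int d then 0
            else if 2 * i \<le> int d then coeff (Ppoly d) (nat i)
            else coeff (Ppoly d) (d - nat i))"

end

theory Submission
  imports Defs
begin

text \<open>
  Writing \<open>1 + t = 2t + (1 - t)\<close> and expanding by the binomial theorem gives
  \<open>Ppoly d * (1 - t) = (1 + t)^(d+1) - (2t)^(d+1)\<close>.  Multiplication by \<open>1 - t\<close> turns
  coefficients into successive differences, so every coefficient of \<open>Ppoly d\<close> is the partial
  sum of the coefficients of the right-hand side; for \<open>i \<le> d\<close> the term \<open>(2t)^(d+1)\<close> does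
  not contribute and \<open>coeff (Ppoly d) i = \<Sum>j\<le>i. (d+1 choose j)\<close>.  Both recurrences then follow from Pascal's
  rule summed over \<open>j \<le> i\<close>, stated for the partial binomial sums \<open>binom_psum\<close>.
\<close>

lemma binomial_truncated_times:
  fixes a b :: "'a::comm_ring_1"
  shows "(\<Sum>j\<le>d. of_nat (Suc d choose j) * a^j * b^(d - j)) * b = (a + b)^Suc d - a^Suc d"
proof -
  have "(a + b)^Suc d = (\<Sum>j\<le>Suc d. of_nat (Suc d choose j) * a^j * b^(Suc d - j))"
    by (rule binomial_ring)
  also have "\<dots> = (\<Sum>j\<le>d. of_nat (Suc d choose j) * a^j * b^(Suc d - j)) + a^Suc d"
    by (simp add: sum.atMost_Suc)
  also have "(\<Sum>j\<le>d. of_nat (Suc d choose j) * a^j * b^(Suc d - j))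
      = (\<Sum>j\<le>d. of_nat (Suc d choose j) * a^j * b^(d - j)) * b"
    unfolding sum_distrib_right
    by (rule sum.cong) (simp_all add: Suc_diff_le power_Suc2 mult.assoc)
  finally show ?thesis by simp
qed

lemma Ppoly_times_one_minus_t:
  "Ppoly d * [:1,-1:] = [:1,1:]^Suc d - [:0,2:]^Suc d"
proof -
  have term_eq: "smult (of_nat (Suc d choose j) * 2^j) ([:0,1:]^j * [:1,-1:]^(d-j))
      = of_nat (Suc d choose j) * [:0,2:]^j * [:1,-1::int:]^(d - j)" for j
  proof -
    have "[:0,2::int:] = smult 2 [:0,1:]" by simp
    then have two_t: "[:0,2::int:]^j = smult (2^j) ([:0,1:]^j)"
      by (simp only: smult_power)
    have const_mult: "[:c:] * p = smult c p" for c :: int and p by simp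
    show ?thesis
      by (simp only: two_t of_nat_poly const_mult mult_smult_left smult_smult mult.assoc)
  qed
  have "Ppoly d = (\<Sum>j\<le>d. of_nat (Suc d choose j) * [:0,2:]^j * [:1,-1:]^(d - j))"
    unfolding Ppoly_def Suc_eq_plus1[symmetric] term_eq ..
  also have "\<dots> * [:1,-1:] = ([:0,2:] + [:1,-1:])^Suc d - [:0,2:]^Suc d"
    by (rule binomial_truncated_times)
  finally show ?thesis by simp
qed

text \<open>Multiplication by \<open>1 - t\<close> takes successive differences of coefficients, so the
  coefficients of \<open>p\<close> are the partial sums of those of \<open>p * (1 - t)\<close>.\<close>
lemma coeff_as_partial_sum:
  fixes p :: "'a::comm_ring_1 poly"
  shows "coeff p i = (\<Sum>j\<le>i. coeff (p * [:1,-1:]) j)"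
proof (induction i)
  case 0
  then show ?case by (simp add: coeff_pCons)
next
  case (Suc i)
  have "coeff (p * [:1,-1:]) (Suc i) = coeff p (Suc i) - coeff p i"
    by (simp add: coeff_pCons)
  with Suc show ?case by simp
qed

definition binom_psum :: "nat \<Rightarrow> nat \<Rightarrow> int" where
  "binom_psum n i = (\<Sum>j\<le>i. int (n choose j))"

text \<open>Pascal's rule summed over \<open>j \<le> i+1\<close>.\<close>
lemma binom_psum_Suc_Suc:
  "binom_psum (Suc n) (Suc i) = binom_psum n (Suc i) + binom_psum n i"
  unfolding binom_psum_def
proof (induction i)
  case 0
  then show ?case by simp
next
  case (Suc i)
  then show ?case
    by (simp add: sum.atMost_Suc[of _ "Suc i"])
qed

text \<open>For \<open>i \<le> d\<close> the low coefficients of \<open>Ppoly d\<close> are partial binomial sums, since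
  \<open>(2t)^(d+1)\<close> only affects degree \<open>d+1\<close>.\<close>
lemma coeff_Ppoly:
  assumes "i \<le> d"
  shows "coeff (Ppoly d) i = binom_psum (Suc d) i"
proof -
  have "coeff (Ppoly d) i = (\<Sum>j\<le>i. coeff ([:1,1:]^Suc d - [:0,2:]^Suc d) j)"
    by (simp only: coeff_as_partial_sum[of _ i] Ppoly_times_one_minus_t)
  also have "\<dots> = (\<Sum>j\<le>i. int (Suc d choose j))"
  proof (rule sum.cong)
    fix j assume "j \<in> {..i}"
    then have j: "j \<le> Suc d" "j \<noteq> Suc d" using assms by auto
    then show "coeff ([:1,1:]^Suc d - [:0,2:]^Suc d) j = int (Suc d choose j)"
      unfolding coeff_diff coeff_linear_poly_power[OF j(1)] by simp
  qed simp
  finally show ?thesis by (simp add: binom_psum_def)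
qed

lemma T_lower_half:
  assumes "2 * i \<le> d"
  shows "T d (int i) = binom_psum (Suc d) i"
  using assms by (simp add: T_def coeff_Ppoly)

lemma T_minus_one: "T d (-1) = 0"
  by (simp add: T_def)

theorem lemma11p2:
  shows "(\<forall>(d::nat) (i::nat). 2 * i < d \<longrightarrow>
            T d (int i) = T (d - 1) (int i) + T (d - 1) (int i - 1))
       \<and> (\<forall>k::nat. k \<ge> 1 \<longrightarrow>
            T (2 * k) (int k) = 2 * T (2 * k - 1) (int k - 1) + int ((2 * k) choose k))
       \<and> (\<forall>(d::nat) (i::nat). 2 * i \<le> d \<longrightarrow>
            T d (int i) = (\<Sum>j = 0..i. int ((d + 1) choose j)))"
proof (intro conjI allI impI)
  fix d i :: nat assume "2 * i < d"
  then obtain m where d: "d = Suc m" by (cases d) auto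
  show "T d (int i) = T (d - 1) (int i) + T (d - 1) (int i - 1)"
  proof (cases i)
    case 0
    then show ?thesis using d T_lower_half[of 0] by (simp add: T_minus_one binom_psum_def)
  next
    case (Suc i')
    have "T d (int i) = binom_psum (Suc d) i"
      using \<open>2 * i < d\<close> by (simp add: T_lower_half)
    also have "\<dots> = binom_psum d i + binom_psum d i'"
      using d Suc by (simp add: binom_psum_Suc_Suc)
    also have "\<dots> = T (d - 1) (int i) + T (d - 1) (int i - 1)"
      using d Suc \<open>2 * i < d\<close> T_lower_half[of i m] T_lower_half[of i' m] by simp
    finally show ?thesis .
  qed
next
  fix k :: nat assume "k \<ge> 1"
  then obtain k' where k: "k = Suc k'" by (cases k) auto
  have "T (2 * k) (int k) = binom_psum (Suc (2 * k)) (Suc k')"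
    using k T_lower_half[of k "2 * k"] by simp
  also have "\<dots> = binom_psum (2 * k) (Suc k') + binom_psum (2 * k) k'"
    by (rule binom_psum_Suc_Suc)
  also have "\<dots> = 2 * binom_psum (2 * k) k' + int (2 * k choose k)"
    using k by (simp add: binom_psum_def)
  also have "binom_psum (2 * k) k' = T (2 * k - 1) (int k - 1)"
    using k T_lower_half[of k' "2 * k - 1"] by simp
  finally show "T (2 * k) (int k) = 2 * T (2 * k - 1) (int k - 1) + int ((2 * k) choose k)" .
next
  fix d i :: nat assume "2 * i \<le> d"
  then show "T d (int i) = (\<Sum>j = 0..i. int ((d + 1) choose j))"
    by (simp add: T_lower_half binom_psum_def atLeast0AtMost)
qed

end
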